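(* Let $\alpha,\beta,\gamma\in\mathbb{Z}[i]$ satisfy $\alpha^2+\beta^2+\gamma^2=0$, $\alpha\beta\gamma\neq0$, $\gcd(\alpha,\beta,\gamma)\in U$, and suppose $\alpha=i^m\alpha'$, $\beta=i^n(1+i)^{2+k}\beta'$, $\gamma=i^l\gamma'$ where $m,n,l\in\{0,1\}$, $k\ge0$ is an integer, and $\alpha',\beta',\gamma'\in O^I$. Then $m+l\equiv1\pmod 2$.
   Context: $\mathbb{Z}[i]$ is the ring of Gaussian integers, $U=\{1,-1,i,-i\}$ its unit group; $R(\alpha),I(\alpha)$ are real and imaginary parts. $O=\{\alpha: R(\alpha)+I(\alpha)\equiv1\pmod 2\}$, $O^I=\{\alpha\in O: R(\alpha)\equiv 1\pmod 4\}$. *)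

theory Defs
  imports Complex_Main
begin

definition gaussian_ints :: "complex set" where
  "gaussian_ints = {complex_of_int a + \<i> * complex_of_int b | a b. True}"

definition gdvd :: "complex \<Rightarrow> complex \<Rightarrow> bool" where
  "gdvd d x \<longleftrightarrow> (\<exists>q\<in>gaussian_ints. x = d * q)"

definition gunits :: "complex set" where
  "gunits = {1, -1, \<i>, -\<i>}"

definition gcd3_is_unit :: "complex \<Rightarrow> complex \<Rightarrow> complex \<Rightarrow> bool" where
  "gcd3_is_unit a b c \<longleftrightarrow>
     (\<forall>d\<in>gaussian_ints. gdvd d a \<and> gdvd d b \<and> gdvd d c \<longrightarrow> d \<in> gunits)"

definition O_I :: "complex set" where
  "O_I = {complex_of_int a + \<i> * complex_of_int b | a b. odd (a + b) \<and> a mod 4 = 1}"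

end

theory Submission
  imports Defs
begin

(* If m + l were even, then i^(2m) = i^(2l) and the relation becomes
   alpha'^2 + gamma'^2 = -+ beta^2, where beta^2 is divisible by (1 + i)^4 = -4.
   But for x in O^I the real part of x^2 is 1 mod 4, so the real part of
   alpha'^2 + gamma'^2 is 2 mod 4 and cannot be a multiple of 4. *)

lemma gaussian_intsI: "complex_of_int a + \<i> * complex_of_int b \<in> gaussian_ints"
  unfolding gaussian_ints_def by blast

lemma gaussian_ints_of_int: "complex_of_int a \<in> gaussian_ints"
  using gaussian_intsI[of a 0] by simp

lemma gaussian_ints_i: "\<i> \<in> gaussian_ints"
  using gaussian_intsI[of 0 1] by simp

lemma gaussian_ints_mult:
  assumes "x \<in> gaussian_ints" "y \<in> gaussian_ints"
  shows "x * y \<in> gaussian_ints"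
proof -
  obtain a b c d where x: "x = complex_of_int a + \<i> * complex_of_int b"
    and y: "y = complex_of_int c + \<i> * complex_of_int d"
    using assms unfolding gaussian_ints_def by blast
  have "x * y = complex_of_int (a*c - b*d) + \<i> * complex_of_int (a*d + b*c)"
    by (simp add: x y algebra_simps complex_eq_iff)
  then show ?thesis by (metis gaussian_intsI)
qed

lemma gaussian_ints_power: "x \<in> gaussian_ints \<Longrightarrow> x ^ k \<in> gaussian_ints"
  using gaussian_ints_of_int[of 1] by (induction k) (simp_all add: gaussian_ints_mult)

lemma gaussian_ints_Re: "z \<in> gaussian_ints \<Longrightarrow> \<exists>p. Re z = of_int p"
  unfolding gaussian_ints_def by auto

lemma O_I_subset_gaussian_ints: "O_I \<subseteq> gaussian_ints"
  unfolding O_I_def gaussian_ints_def by blast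

lemma Re_square_O_I:
  assumes "x \<in> O_I"
  obtains r where "Re (x^2) = of_int r" "r mod 4 = 1"
proof -
  obtain a b where x: "x = complex_of_int a + \<i> * complex_of_int b"
    and "odd (a + b)" "a mod 4 = 1"
    using assms unfolding O_I_def by blast
  moreover have "even b" using \<open>odd (a + b)\<close> \<open>a mod 4 = 1\<close> by presburger
  ultimately obtain a' b' where "a = 4 * a' + 1" "b = 2 * b'"
    by (metis evenE div_mod_decomp_int add.commute mult.commute)
  then have "a^2 - b^2 = 4 * (4 * a'^2 + 2 * a' - b'^2) + 1"
    by (simp add: power2_eq_square algebra_simps)
  then have "(a^2 - b^2) mod 4 = 1" by presburger
  moreover have "Re (x^2) = of_int (a^2 - b^2)" by (simp add: x power2_eq_square)
  ultimately show thesis using that by blast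
qed

lemma O_I_sum_squares_not_4_multiple:
  assumes "x \<in> O_I" "y \<in> O_I" "w \<in> gaussian_ints"
  shows "x^2 + y^2 \<noteq> 4 * w"
proof
  assume eq: "x^2 + y^2 = 4 * w"
  obtain r s where "Re (x^2) = of_int r" "r mod 4 = 1" "Re (y^2) = of_int s" "s mod 4 = 1"
    using Re_square_O_I[OF assms(1)] Re_square_O_I[OF assms(2)] by metis
  moreover obtain p where "Re w = of_int p" using gaussian_ints_Re[OF assms(3)] by blast
  ultimately have "r + s = 4 * p" "(r + s) mod 4 = 2"
    using arg_cong[OF eq, of Re] by (simp_all add: mod_add_eq[symmetric] flip: of_int_eq_iff)
  then show False by presburger
qed

lemma one_plus_i_power_square: "((1 + \<i>)^(2 + k))^2 = -4 * (2 * \<i>)^k"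
proof -
  have "((1 + \<i>)^(2 + k))^2 = ((1 + \<i>)^2)^(2 + k)"
    by (simp only: power_mult[symmetric] mult.commute)
  also have "(1 + \<i>)^2 = 2 * \<i>" by (simp add: power2_eq_square algebra_simps)
  finally show ?thesis by (simp add: power_add power2_eq_square)
qed

theorem lemma4p2:
  fixes \<alpha> \<beta> \<gamma> \<alpha>' \<beta>' \<gamma>' :: complex and m n l k :: nat
  assumes "\<alpha> \<in> gaussian_ints" "\<beta> \<in> gaussian_ints" "\<gamma> \<in> gaussian_ints"
    and "\<alpha>^2 + \<beta>^2 + \<gamma>^2 = 0"
    and "\<alpha> * \<beta> * \<gamma> \<noteq> 0"
    and "gcd3_is_unit \<alpha> \<beta> \<gamma>"
    and "m \<in> {0,1}" "n \<in> {0,1}" "l \<in> {0,1}"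
    and "\<alpha>' \<in> O_I" "\<beta>' \<in> O_I" "\<gamma>' \<in> O_I"
    and "\<alpha> = \<i>^m * \<alpha>'"
    and "\<beta> = \<i>^n * (1 + \<i>)^(2 + k) * \<beta>'"
    and "\<gamma> = \<i>^l * \<gamma>'"
  shows "odd (m + l)"
proof (rule ccontr)
  assume "\<not> odd (m + l)"
  then have "l = m" using assms(7,9) by auto
  define w where "w = \<i>^(2*n) * (2*\<i>)^k * \<beta>'^2"
  have w: "w \<in> gaussian_ints"
    using O_I_subset_gaussian_ints assms(11) gaussian_ints_of_int[of 2] gaussian_ints_of_int[of "-1"]
    unfolding w_def
    by (auto intro!: gaussian_ints_mult gaussian_ints_power gaussian_ints_i)
  have "\<beta>^2 = (\<i>^n)^2 * ((1 + \<i>)^(2 + k))^2 * \<beta>'^2"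
    by (simp only: assms(14) power_mult_distrib)
  also have "\<dots> = -4 * w"
    unfolding one_plus_i_power_square by (simp only: w_def power_mult[symmetric] mult_ac)
  finally have "\<beta>^2 = -4 * w" .
  moreover have "\<alpha>^2 + \<gamma>^2 = (-1)^m * (\<alpha>'^2 + \<gamma>'^2)"
    by (simp add: assms(13,15) \<open>l = m\<close> power_mult_distrib power_mult[symmetric]
        power_mult[of \<i> 2] algebra_simps)
  ultimately have "(-1)^m * (\<alpha>'^2 + \<gamma>'^2) = 4 * w"
    using assms(4) by (simp add: algebra_simps)
  then have "\<alpha>'^2 + \<gamma>'^2 = 4 * ((-1)^m * w)"
    by (metis minus_one_mult_self mult.assoc mult.left_commute mult_1)
  moreover have "(-1)^m * w \<in> gaussian_ints"
    using w gaussian_ints_of_int[of "-1"] by (simp add: gaussian_ints_mult gaussian_ints_power)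
  ultimately show False using O_I_sum_squares_not_4_multiple assms(10,12) by blast
qed

end
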